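(* Let $k\ge 1$ be an integer. If a graph $G$ has at most $3k$ vertices, then $m(G)\le k+1$.
   Context: All graphs are finite, simple and undirected. A list assignment $L$ for a graph $G$ assigns to each vertex $v$ a set $L(v)$ of colors; an $L$-coloring is a proper vertex coloring $c$ of $G$ with $c(v)\in L(v)$ for every vertex $v$. A $k$-list assignment is a list assignment with $|L(v)|=k$ for all $v$. $G$ is uniquely $k$-list colorable (U$k$LC) if there exists a $k$-list assignment $L$ such that $G$ has exactly one $L$-coloring. $G$ has property $M(k)$ if it is not U$k$LC, i.e. for every $k$-list assignment $L$, $G$ has either no $L$-coloring or at least two $L$-colorings. The m-number $m(G)$ is the least integer $k\ge 1$ such that $G$ has property $M(k)$. (Every U$k$LC graph is also U$(k-1)$LC, so $G$ is U$k$LC iff $k<m(G)$.) *)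

theory Defs
  imports "HOL-Library.FuncSet"
begin

definition simple_graph :: "'a set \<Rightarrow> ('a \<Rightarrow> 'a \<Rightarrow> bool) \<Rightarrow> bool" where
  "simple_graph V E \<longleftrightarrow> finite V \<and> (\<forall>u v. E u v \<longrightarrow> u \<in> V \<and> v \<in> V)
     \<and> (\<forall>u v. E u v \<longrightarrow> E v u) \<and> (\<forall>v. \<not> E v v)"

text \<open>An L-coloring: a proper coloring c with c v in L v for all v in V
  (as an extensional function on V, so distinct colorings are distinct functions).\<close>
definition L_coloring :: "'a set \<Rightarrow> ('a \<Rightarrow> 'a \<Rightarrow> bool) \<Rightarrow> ('a \<Rightarrow> nat set) \<Rightarrow> ('a \<Rightarrow> nat) \<Rightarrow> bool" where
  "L_coloring V E L c \<longleftrightarrow> c \<in> (\<Pi>\<^sub>E v\<in>V. L v) \<and> (\<forall>u\<in>V. \<forall>v\<in>V. E u v \<longrightarrow> c u \<noteq> c v)"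

definition k_list_assignment :: "'a set \<Rightarrow> nat \<Rightarrow> ('a \<Rightarrow> nat set) \<Rightarrow> bool" where
  "k_list_assignment V k L \<longleftrightarrow> (\<forall>v\<in>V. finite (L v) \<and> card (L v) = k)"

definition UkLC :: "'a set \<Rightarrow> ('a \<Rightarrow> 'a \<Rightarrow> bool) \<Rightarrow> nat \<Rightarrow> bool" where
  "UkLC V E k \<longleftrightarrow> (\<exists>L. k_list_assignment V k L \<and> (\<exists>!c. L_coloring V E L c))"

definition property_M :: "'a set \<Rightarrow> ('a \<Rightarrow> 'a \<Rightarrow> bool) \<Rightarrow> nat \<Rightarrow> bool" where
  "property_M V E k \<longleftrightarrow> \<not> UkLC V E k"

definition m_number :: "'a set \<Rightarrow> ('a \<Rightarrow> 'a \<Rightarrow> bool) \<Rightarrow> nat" where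
  "m_number V E = (LEAST k. k \<ge> 1 \<and> property_M V E k)"

end

theory Submission
  imports Defs
begin

text \<open>Let \<open>c\<close> be the unique \<open>L\<close>-colouring, with lists of size \<open>s\<close> on \<open>n\<close> vertices. Every list
  consists of colours used by \<open>c\<close> (otherwise recolour a single vertex), and no nontrivial
  permutation of the colour classes respects the lists (it would give a second colouring). The
  latter yields a colour class \<open>P\<close> such that every other used colour is missing from some list
  in \<open>P\<close>. In particular \<open>|P| \<ge> 2\<close> once \<open>s \<ge> 2\<close>, and deleting \<open>P\<close> together with its colour from
  all lists preserves both properties with list size \<open>s - 1\<close>. By induction \<open>3s \<le> n + 2\<close>: for
  \<open>|P| \<ge> 3\<close> directly, for \<open>P = {x, y}\<close> because \<open>L x\<close> and \<open>L y\<close> share at most one colour. For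
  \<open>s = k + 1\<close> this contradicts \<open>n \<le> 3k\<close>.\<close>

lemma finite_self_map_bij_betw_subset:
  assumes "finite C" "C \<noteq> {}" "f ` C \<subseteq> C"
  shows "\<exists>S\<subseteq>C. S \<noteq> {} \<and> bij_betw f S S"
  using assms
proof (induction C rule: finite_psubset_induct)
  case (psubset C)
  show ?case
  proof (cases "f ` C = C")
    case True
    then show ?thesis
      using psubset.prems finite_surj_inj[OF psubset.hyps(1)] by (auto simp: bij_betw_def)
  next
    case False
    then have "f ` C \<subset> C" using psubset.prems(2) by blast
    moreover have "f ` f ` C \<subseteq> f ` C" using psubset.prems(2) by blast
    ultimately obtain S where "S \<subseteq> f ` C" "S \<noteq> {}" "bij_betw f S S"
      using psubset.IH[of "f ` C"] psubset.prems(1) by auto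
    then show ?thesis using psubset.prems(2) by blast
  qed
qed

lemma card_two_lists_bound:
  assumes "finite C" "A \<union> B \<subseteq> C" "A \<inter> B \<subseteq> {a}" "s \<le> card A" "s \<le> card B"
  shows "2 * s \<le> card C + 1"
proof -
  have fin: "finite A" "finite B" using assms(1,2) finite_subset by auto
  have "card (A \<union> B) \<le> card C" using assms(1,2) by (rule card_mono)
  moreover have "card (A \<inter> B) \<le> 1" using card_mono[OF _ assms(3)] by simp
  ultimately show ?thesis using card_Un_Int[OF fin] assms(4,5) by linarith
qed

definition recoloring_rigid :: "'a set \<Rightarrow> ('a \<Rightarrow> nat set) \<Rightarrow> ('a \<Rightarrow> nat) \<Rightarrow> bool" where
  "recoloring_rigid V L c \<longleftrightarrow>
     (\<forall>\<sigma>. inj_on \<sigma> (c ` V) \<and> (\<forall>v\<in>V. \<sigma> (c v) \<in> L v) \<longrightarrow> (\<forall>b\<in>c ` V. \<sigma> b = b))"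

lemma L_coloring_recolor_classes:
  assumes "L_coloring V E L c" "inj_on \<sigma> (c ` V)" "\<forall>v\<in>V. \<sigma> (c v) \<in> L v"
  shows "L_coloring V E L (restrict (\<sigma> \<circ> c) V)"
  unfolding L_coloring_def
proof
  show "restrict (\<sigma> \<circ> c) V \<in> (\<Pi>\<^sub>E v\<in>V. L v)" using assms(3) by auto
  show "\<forall>u\<in>V. \<forall>w\<in>V. E u w \<longrightarrow> restrict (\<sigma> \<circ> c) V u \<noteq> restrict (\<sigma> \<circ> c) V w"
  proof (intro ballI impI)
    fix u w assume "u \<in> V" "w \<in> V" "E u w"
    then have "c u \<noteq> c w" using assms(1) unfolding L_coloring_def by blast
    then show "restrict (\<sigma> \<circ> c) V u \<noteq> restrict (\<sigma> \<circ> c) V w"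
      using assms(2) \<open>u \<in> V\<close> \<open>w \<in> V\<close> by (auto dest: inj_onD)
  qed
qed

lemma unique_L_coloring_recoloring_rigid:
  assumes "L_coloring V E L c" and unique: "\<And>d. L_coloring V E L d \<Longrightarrow> d = c"
  shows "recoloring_rigid V L c"
  unfolding recoloring_rigid_def
proof (intro allI impI ballI)
  fix \<sigma> b assume \<sigma>: "inj_on \<sigma> (c ` V) \<and> (\<forall>v\<in>V. \<sigma> (c v) \<in> L v)" and "b \<in> c ` V"
  then obtain v where "v \<in> V" "b = c v" by blast
  have "restrict (\<sigma> \<circ> c) V = c"
    using unique L_coloring_recolor_classes[OF assms(1)] \<sigma> by blast
  then show "\<sigma> b = b" using \<open>v \<in> V\<close> \<open>b = c v\<close> by (metis comp_apply restrict_apply')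
qed

lemma unique_L_coloring_lists_used:
  assumes "simple_graph V E" "L_coloring V E L c" and unique: "\<And>d. L_coloring V E L d \<Longrightarrow> d = c"
    and "v \<in> V"
  shows "L v \<subseteq> c ` V"
proof
  fix b assume "b \<in> L v"
  show "b \<in> c ` V"
  proof (rule ccontr)
    assume "b \<notin> c ` V"
    have "L_coloring V E L (c(v := b))"
      unfolding L_coloring_def
    proof
      show "c(v := b) \<in> (\<Pi>\<^sub>E v\<in>V. L v)"
        using assms(2,4) \<open>b \<in> L v\<close> unfolding L_coloring_def by (auto simp: PiE_def extensional_def)
      show "\<forall>u\<in>V. \<forall>w\<in>V. E u w \<longrightarrow> (c(v := b)) u \<noteq> (c(v := b)) w"
        using assms(1,2) \<open>b \<notin> c ` V\<close> unfolding L_coloring_def simple_graph_def by auto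
    qed
    then have "c v = b" using unique by (metis fun_upd_same)
    then show False using \<open>b \<notin> c ` V\<close> \<open>v \<in> V\<close> by blast
  qed
qed

text \<open>Otherwise each used colour \<open>a\<close> has another used colour \<open>f a\<close> allowed on its whole class;
  \<open>f\<close> permutes some nonempty set of colours, and moving those classes along \<open>f\<close> is a nontrivial
  admissible recolouring.\<close>
lemma recoloring_rigid_dominating_class:
  assumes "finite V" "V \<noteq> {}" "\<forall>v\<in>V. c v \<in> L v" and rigid: "recoloring_rigid V L c"
  shows "\<exists>a\<in>c ` V. \<forall>b\<in>c ` V - {a}. \<exists>v\<in>V. c v = a \<and> b \<notin> L v"
proof (rule ccontr)
  assume "\<not> ?thesis"
  then have "\<forall>a\<in>c ` V. \<exists>b\<in>c ` V - {a}. \<forall>v\<in>V. c v = a \<longrightarrow> b \<in> L v" by blast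
  then obtain f where f: "\<And>a. a \<in> c ` V \<Longrightarrow> f a \<in> c ` V - {a} \<and> (\<forall>v\<in>V. c v = a \<longrightarrow> f a \<in> L v)"
    by metis
  then obtain S where S: "S \<subseteq> c ` V" "S \<noteq> {}" "bij_betw f S S"
    using finite_self_map_bij_betw_subset[of "c ` V" f] assms(1,2) by blast
  define \<sigma> where "\<sigma> b = (if b \<in> S then f b else b)" for b
  have "inj_on \<sigma> (c ` V)"
  proof (rule inj_onI)
    fix x y assume eq: "\<sigma> x = \<sigma> y"
    then have "x \<in> S \<longleftrightarrow> y \<in> S"
      using bij_betw_imp_surj_on[OF S(3)] by (auto simp: \<sigma>_def split: if_splits)
    then show "x = y"
      using eq bij_betw_imp_inj_on[OF S(3)] by (auto simp: \<sigma>_def split: if_splits dest: inj_onD)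
  qed
  moreover have "\<forall>v\<in>V. \<sigma> (c v) \<in> L v" using f assms(3) by (auto simp: \<sigma>_def)
  ultimately have "\<forall>b\<in>c ` V. \<sigma> b = b" using rigid unfolding recoloring_rigid_def by blast
  then show False using S(1,2) f unfolding \<sigma>_def by (metis Diff_iff insertCI subsetD ex_in_conv)
qed

lemma recoloring_rigid_remove_color:
  assumes rigid: "recoloring_rigid V L c" and "\<forall>v\<in>V. c v \<in> L v"
  shows "recoloring_rigid {v\<in>V. c v \<noteq> a} (\<lambda>v. L v - {a}) c"
  unfolding recoloring_rigid_def
proof (intro allI impI)
  fix \<sigma> assume \<sigma>: "inj_on \<sigma> (c ` {v\<in>V. c v \<noteq> a}) \<and> (\<forall>v\<in>{v\<in>V. c v \<noteq> a}. \<sigma> (c v) \<in> L v - {a})"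
  have image: "c ` {v\<in>V. c v \<noteq> a} = c ` V - {a}" by blast
  have "inj_on (\<sigma>(a := a)) (c ` V)"
  proof (rule inj_onI)
    fix x y assume "x \<in> c ` V" "y \<in> c ` V" "(\<sigma>(a := a)) x = (\<sigma>(a := a)) y"
    then show "x = y"
      using \<sigma> unfolding image by (cases "x = a"; cases "y = a") (auto dest: inj_onD)
  qed
  moreover have "\<forall>v\<in>V. (\<sigma>(a := a)) (c v) \<in> L v" using \<sigma> assms(2) by auto
  ultimately have "\<forall>b\<in>c ` V. (\<sigma>(a := a)) b = b" using rigid unfolding recoloring_rigid_def by blast
  then show "\<forall>b\<in>c ` {v\<in>V. c v \<noteq> a}. \<sigma> b = b" unfolding image by (metis Diff_iff fun_upd_other insertCI)
qed

lemma dominating_class_card: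
  assumes "finite V" "\<forall>v\<in>V. L v \<subseteq> c ` V" "\<forall>v\<in>V. s \<le> card (L v)" "2 \<le> s" "a \<in> c ` V"
    and dom: "\<forall>b\<in>c ` V - {a}. \<exists>v\<in>V. c v = a \<and> b \<notin> L v"
  shows "2 \<le> card {v\<in>V. c v = a}"
    and "card {v\<in>V. c v = a} = 2 \<Longrightarrow> 2 * s \<le> card (c ` V) + 1"
proof -
  define P where "P = {v\<in>V. c v = a}"
  have class_lists: "L x \<inter> L y \<subseteq> {a}" if "P \<subseteq> {x, y}" "x \<in> V" for x y
    using dom assms(2) that unfolding P_def by blast
  have "P \<noteq> {x}" for x
  proof
    assume "P = {x}"
    then have "x \<in> V" "L x \<subseteq> {a}" using class_lists[of x x] unfolding P_def by auto
    then have "s \<le> card {a}" using assms(3) card_mono[of "{a}" "L x"] by fastforce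
    then show False using assms(4) by simp
  qed
  moreover have "P \<noteq> {}" using assms(5) unfolding P_def by blast
  moreover have "finite P" using assms(1) unfolding P_def by simp
  ultimately show "2 \<le> card {v\<in>V. c v = a}"
    unfolding P_def[symmetric] by (metis card_0_eq card_1_singleton_iff less_2_cases not_le One_nat_def)
  assume "card {v\<in>V. c v = a} = 2"
  then obtain x y where "P = {x, y}" unfolding P_def[symmetric] by (auto simp: card_2_iff)
  then have "x \<in> V" "y \<in> V" unfolding P_def by auto
  show "2 * s \<le> card (c ` V) + 1"
  proof (rule card_two_lists_bound[OF finite_imageI[OF assms(1)]])
    show "L x \<union> L y \<subseteq> c ` V" using assms(2) \<open>x \<in> V\<close> \<open>y \<in> V\<close> by simp
    show "L x \<inter> L y \<subseteq> {a}" using class_lists[of x y] \<open>P = {x, y}\<close> \<open>x \<in> V\<close> by simp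
    show "s \<le> card (L x)" "s \<le> card (L y)" using assms(3) \<open>x \<in> V\<close> \<open>y \<in> V\<close> by simp_all
  qed
qed

lemma card_remove_color_class:
  assumes "finite V" "a \<in> c ` V"
  shows "card V = card {v\<in>V. c v \<noteq> a} + card {v\<in>V. c v = a}"
    and "card (c ` V) = card (c ` {v\<in>V. c v \<noteq> a}) + 1"
proof -
  have "V = {v\<in>V. c v \<noteq> a} \<union> {v\<in>V. c v = a}" by auto
  then show "card V = card {v\<in>V. c v \<noteq> a} + card {v\<in>V. c v = a}"
    using assms(1) by (metis (no_types, lifting) card_Un_disjoint disjoint_iff finite_Un mem_Collect_eq)
  have "c ` {v\<in>V. c v \<noteq> a} = c ` V - {a}" by blast
  then show "card (c ` V) = card (c ` {v\<in>V. c v \<noteq> a}) + 1"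
    using card_Suc_Diff1[OF finite_imageI[OF assms(1)] assms(2)] by simp
qed

lemma lists_remove_color:
  fixes a :: nat
  assumes "\<forall>v\<in>V. c v \<in> L v" "\<forall>v\<in>V. L v \<subseteq> c ` V" "\<forall>v\<in>V. s \<le> card (L v)"
  defines "V' \<equiv> {v\<in>V. c v \<noteq> a}"
  shows "\<forall>v\<in>V'. c v \<in> L v - {a}" and "\<forall>v\<in>V'. L v - {a} \<subseteq> c ` V'"
    and "\<forall>v\<in>V'. s - 1 \<le> card (L v - {a})"
proof -
  have image: "c ` V' = c ` V - {a}" unfolding V'_def by blast
  show "\<forall>v\<in>V'. c v \<in> L v - {a}" "\<forall>v\<in>V'. L v - {a} \<subseteq> c ` V'"
    using assms(1,2) unfolding image unfolding V'_def by auto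
  show "\<forall>v\<in>V'. s - 1 \<le> card (L v - {a})"
  proof
    fix v assume "v \<in> V'"
    then have "s - 1 \<le> card (L v) - card {a}" using assms(3) unfolding V'_def by auto
    also have "\<dots> \<le> card (L v - {a})" by (rule diff_card_le_card_Diff) simp
    finally show "s - 1 \<le> card (L v - {a})" .
  qed
qed

text \<open>The bound on the number of colours is carried along because the induction step needs it
  when the deleted class has two vertices.\<close>
lemma recoloring_rigid_card_bound:
  assumes "finite V" "V \<noteq> {}" "\<forall>v\<in>V. c v \<in> L v" "\<forall>v\<in>V. L v \<subseteq> c ` V"
    "\<forall>v\<in>V. s \<le> card (L v)" "recoloring_rigid V L c"
  shows "3 * s \<le> card V + 2 \<and> card (c ` V) + s \<le> card V + 1"
  using assms
proof (induction "card V" arbitrary: V L s rule: less_induct)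
  case less
  note fin = less.prems(1) and ne = less.prems(2) and cL = less.prems(3)
    and used = less.prems(4) and size = less.prems(5) and rigid = less.prems(6)
  show ?case
  proof (cases "s \<le> 1")
    case True
    moreover have "card (c ` V) \<le> card V" using fin by (rule card_image_le)
    moreover have "1 \<le> card V" using fin ne by (simp add: Suc_leI card_gt_0_iff)
    ultimately show ?thesis by linarith
  next
    case False
    obtain a where a: "a \<in> c ` V" and dom: "\<forall>b\<in>c ` V - {a}. \<exists>v\<in>V. c v = a \<and> b \<notin> L v"
      using recoloring_rigid_dominating_class[OF fin ne cL rigid] by blast
    define P where "P = {v\<in>V. c v = a}"
    define V' where "V' = {v\<in>V. c v \<noteq> a}"
    have "2 \<le> s" using False by simp
    note class_card = dominating_class_card[OF fin used size this a dom, folded P_def]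
    note card_V = card_remove_color_class(1)[OF fin a, folded P_def V'_def]
    note card_colors = card_remove_color_class(2)[OF fin a, folded V'_def]
    obtain v where "v \<in> V" using ne by blast
    then have "s \<le> card (c ` V)"
      using size used card_mono[OF finite_imageI[OF fin]] by (meson le_trans)
    then have "V' \<noteq> {}" using card_colors False by auto
    have IH: "3 * (s - 1) \<le> card V' + 2 \<and> card (c ` V') + (s - 1) \<le> card V' + 1"
    proof (rule less.hyps[of V' "\<lambda>v. L v - {a}"])
      show "card V' < card V" using card_V class_card(1) by simp
      show "finite V'" using fin unfolding V'_def by simp
      show "recoloring_rigid V' (\<lambda>v. L v - {a}) c"
        unfolding V'_def using rigid cL by (rule recoloring_rigid_remove_color)
    qed (use \<open>V' \<noteq> {}\<close> lists_remove_color[OF cL used size, of a, folded V'_def] in auto)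
    have colors: "card (c ` V) + s \<le> card V + 1"
      using IH card_V card_colors class_card(1) False by linarith
    moreover have "3 * s \<le> card V + 2"
    proof (cases "card P = 2")
      case True
      then show ?thesis using class_card(2) colors by linarith
    next
      case False
      then show ?thesis using IH card_V class_card(1) by linarith
    qed
    ultimately show ?thesis by blast
  qed
qed

lemma UkLC_card_bound:
  assumes "simple_graph V E" "V \<noteq> {}" "UkLC V E s"
  shows "3 * s \<le> card V + 2"
proof -
  obtain L c where L: "k_list_assignment V s L" and c: "L_coloring V E L c"
    and unique: "\<And>d. L_coloring V E L d \<Longrightarrow> d = c"
    using assms(3) unfolding UkLC_def by blast
  have "finite V" using assms(1) unfolding simple_graph_def by blast
  moreover have "\<forall>v\<in>V. c v \<in> L v" using c unfolding L_coloring_def by auto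
  moreover have "\<forall>v\<in>V. L v \<subseteq> c ` V"
    using unique_L_coloring_lists_used[OF assms(1) c unique] by blast
  moreover have "\<forall>v\<in>V. s \<le> card (L v)" using L unfolding k_list_assignment_def by simp
  moreover have "recoloring_rigid V L c" using c unique by (rule unique_L_coloring_recoloring_rigid)
  ultimately show ?thesis using recoloring_rigid_card_bound assms(2) by blast
qed

theorem theorem2p2:
  fixes V :: "'a set" and E :: "'a \<Rightarrow> 'a \<Rightarrow> bool" and k :: nat
  assumes "simple_graph V E" and "V \<noteq> {}" and "k \<ge> 1" and "card V \<le> 3 * k"
  shows "m_number V E \<le> k + 1"
proof -
  have "\<not> UkLC V E (k + 1)"
  proof
    assume "UkLC V E (k + 1)"
    then have "3 * (k + 1) \<le> card V + 2" by (rule UkLC_card_bound[OF assms(1,2)])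
    then show False using assms(4) by simp
  qed
  then have "property_M V E (k + 1)" unfolding property_M_def .
  then show ?thesis unfolding m_number_def by (intro Least_le) simp
qed

end
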